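(* The intersection of two Bianchi-convex subsets of $\mathcal{A}_n$ is Bianchi-convex.
   Context: $\mathcal{A}_n$ is the Euclidean space of algebraic curvature tensors on $\mathbb{R}^n$: symmetric bilinear forms on $\Lambda^2\mathbb{R}^n$ satisfying the first Bianchi identity, viewed as self-adjoint endomorphisms of $\Lambda^2\mathbb{R}^n$ (with $e_i\wedge e_j$, $i<j$, orthonormal), scalar product $\mathrm{tr}(R\circ S)$. Supporting submanifold of a closed $C$ at $x_0\in\partial C$: a codimension-one submanifold $N\ni x_0$ such that for some open neighbourhood $U$ of $x_0$, $U\setminus N$ has two components $U_1,U_2$ with $C\cap\overline U\subseteq\overline{U_1}$; $\mathrm{II}^N_S(X,Y)=\langle\nabla_XY,\mathbf n_S\rangle$ with $\mathbf n$ the unit normal pointing away from $C$. $(T_1,\dots,T_n)\in\mathcal{A}_n^n$ satisfies the second Bianchi identity if for some orthonormal basis $(b_i)$ of $\mathbb{R}^n$, $T_i(b_j\wedge b_k)+T_j(b_k\wedge b_i)+T_k(b_i\wedge b_j)=0$ for all $i,j,k$. A closed $\Omega\subseteq\mathcal{A}_n$ is Bianchi-convex if for every $\epsilon>0$ and $R\in\partial\Omega$ there is a supporting submanifold $N$ of $\Omega$ in $R$ such that for all $S\in N$ and all $(T_1,\dots,T_n)\in(T_SN)^n$ satisfying the second Bianchi identity, $\sum_i\mathrm{II}^N_S(T_i,T_i)\le\epsilon\sum_i\|T_i\|^2$. *)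

theory Defs
  imports "HOL-Analysis.Analysis"
begin

text \<open>Algebraic curvature tensors on R^n, n = CARD('n). An element R is stored through its
  components R_abcd = <R(e_a wedge e_b), e_c wedge e_d> as a 4-tensor.\<close>

type_synonym 'n tensor4 = "real^'n^'n^'n^'n"

definition acts :: "'n::finite tensor4 set" where
  "acts = {R. \<forall>a b c d.
      R$a$b$c$d = - (R$b$a$c$d) \<and>
      R$a$b$c$d = - (R$a$b$d$c) \<and>
      R$a$b$c$d = R$c$d$a$b \<and>
      R$a$b$c$d + R$b$c$a$d + R$c$a$b$d = 0}"

text \<open>Scalar product tr(R o S) = sum over a<b, c<d of R_abcd S_abcd, which by the
  antisymmetries equals one quarter of the full component sum.\<close>

definition acinner :: "'n::finite tensor4 \<Rightarrow> 'n tensor4 \<Rightarrow> real" where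
  "acinner R S = (R \<bullet> S) / 4"

definition acnorm2 :: "'n::finite tensor4 \<Rightarrow> real" where
  "acnorm2 R = acinner R R"

text \<open>Multilinear evaluation: tev R x y z w = <R(x wedge y), z wedge w>.\<close>

definition tev :: "'n::finite tensor4 \<Rightarrow> real^'n \<Rightarrow> real^'n \<Rightarrow> real^'n \<Rightarrow> real^'n \<Rightarrow> real" where
  "tev R x y z w = (\<Sum>a\<in>UNIV. \<Sum>b\<in>UNIV. \<Sum>c\<in>UNIV. \<Sum>d\<in>UNIV.
      R$a$b$c$d * x$a * y$b * z$c * w$d)"

definition ddir :: "'a::real_normed_vector \<Rightarrow> ('a \<Rightarrow> real) \<Rightarrow> 'a \<Rightarrow> real" where
  "ddir v f x = deriv (\<lambda>t. f (x + t *\<^sub>R v)) 0"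

fun iter_ddir :: "'a::real_normed_vector list \<Rightarrow> ('a \<Rightarrow> real) \<Rightarrow> 'a \<Rightarrow> real" where
  "iter_ddir [] f = f"
| "iter_ddir (v # vs) f = ddir v (iter_ddir vs f)"

definition smooth_fun_on :: "'a::real_normed_vector set \<Rightarrow> ('a \<Rightarrow> real) \<Rightarrow> bool" where
  "smooth_fun_on V f \<longleftrightarrow>
     (\<forall>vs. continuous_on V (iter_ddir vs f) \<and>
        (\<forall>v. \<forall>x\<in>V. (\<lambda>t. iter_ddir vs f (x + t *\<^sub>R v)) differentiable (at 0)))"

definition hypersurface :: "'n::finite tensor4 set \<Rightarrow> bool" where
  "hypersurface N \<longleftrightarrow> N \<subseteq> acts \<and>
     (\<forall>p\<in>N. \<exists>V f. open V \<and> p \<in> V \<and> smooth_fun_on V f \<and>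
        (\<exists>v\<in>acts. ddir v f p \<noteq> 0) \<and>
        N \<inter> V = {x \<in> acts \<inter> V. f x = 0})"

definition tangent_space :: "'n::finite tensor4 set \<Rightarrow> 'n tensor4 \<Rightarrow> 'n tensor4 set" where
  "tangent_space N S = {v. \<exists>\<gamma> \<delta>. \<delta> > 0 \<and> \<gamma> 0 = S \<and> (\<forall>t. \<bar>t\<bar> < \<delta> \<longrightarrow> \<gamma> t \<in> N) \<and>
      (\<gamma> has_vector_derivative v) (at 0)}"

definition supporting :: "'n::finite tensor4 set \<Rightarrow> 'n tensor4 \<Rightarrow> 'n tensor4 set
    \<Rightarrow> 'n tensor4 set \<Rightarrow> 'n tensor4 set \<Rightarrow> 'n tensor4 set \<Rightarrow> bool" where
  "supporting C x0 N U U1 U2 \<longleftrightarrow>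
     hypersurface N \<and> x0 \<in> N \<and> openin (top_of_set acts) U \<and> x0 \<in> U \<and>
     U1 \<noteq> U2 \<and> components (U - N) = {U1, U2} \<and>
     C \<inter> closure U \<subseteq> closure U1"

definition away_normal :: "'n::finite tensor4 set \<Rightarrow> 'n tensor4 set \<Rightarrow> 'n tensor4
    \<Rightarrow> 'n tensor4 \<Rightarrow> bool" where
  "away_normal N U2 S \<nu> \<longleftrightarrow> \<nu> \<in> acts \<and> acnorm2 \<nu> = 1 \<and>
     (\<forall>v\<in>tangent_space N S. acinner \<nu> v = 0) \<and>
     (\<exists>\<delta>>0. \<forall>t. 0 < t \<and> t < \<delta> \<longrightarrow> S + t *\<^sub>R \<nu> \<in> U2)"

text \<open>Second Bianchi identity for an n-tuple T indexed by 'n, w.r.t. some orthonormal basis b.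
  The identity in Lambda^2 is tested against the basis b_l wedge b_m.\<close>

definition second_bianchi :: "('n::finite \<Rightarrow> 'n tensor4) \<Rightarrow> bool" where
  "second_bianchi T \<longleftrightarrow> (\<exists>b :: 'n \<Rightarrow> real^'n.
     (\<forall>i j. b i \<bullet> b j = (if i = j then 1 else 0)) \<and>
     (\<forall>i j k l m. tev (T i) (b j) (b k) (b l) (b m) + tev (T j) (b k) (b i) (b l) (b m)
                 + tev (T k) (b i) (b j) (b l) (b m) = 0))"

text \<open>Bianchi-convexity. II^N_S(T,T) = <gamma''(0), nu> for any curve gamma in N with
  gamma(0) = S and gamma'(0) = T (independent of gamma).\<close>

definition bianchi_convex :: "'n::finite tensor4 set \<Rightarrow> bool" where
  "bianchi_convex \<Omega> \<longleftrightarrow> \<Omega> \<subseteq> acts \<and> closed \<Omega> \<and>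
     (\<forall>\<epsilon>>0. \<forall>R\<in>(top_of_set acts) frontier_of \<Omega>. \<exists>N U U1 U2.
        supporting \<Omega> R N U U1 U2 \<and>
        (\<forall>S\<in>N. \<exists>\<nu>. away_normal N U2 S \<nu> \<and>
           (\<forall>(\<gamma> :: 'n \<Rightarrow> real \<Rightarrow> 'n tensor4) \<gamma>' acc \<delta>.
              \<delta> > 0 \<and>
              (\<forall>i. \<gamma> i 0 = S \<and>
                   (\<forall>t. \<bar>t\<bar> < \<delta> \<longrightarrow> \<gamma> i t \<in> N \<and>
                        (\<gamma> i has_vector_derivative \<gamma>' i t) (at t)) \<and>
                   (\<gamma>' i has_vector_derivative acc i) (at 0)) \<and>
              second_bianchi (\<lambda>i. \<gamma>' i 0)
              \<longrightarrow> (\<Sum>i\<in>UNIV. acinner (acc i) \<nu>) \<le> \<epsilon> * (\<Sum>i\<in>UNIV. acnorm2 (\<gamma>' i 0)))))"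

end

theory Submission
  imports Defs
begin

text \<open>A boundary point of \<open>\<Omega>1 \<inter> \<Omega>2\<close> is a boundary point of one of the two sets, and a
  supporting submanifold of that set is also supporting for the smaller set \<open>\<Omega>1 \<inter> \<Omega>2\<close>.
  The curvature condition only involves the submanifold and the side \<open>U2\<close> into which the
  normal points, not the set itself, so it carries over unchanged.\<close>

definition bianchi_curvature_le :: "real \<Rightarrow> 'n::finite tensor4 set \<Rightarrow> 'n tensor4 set \<Rightarrow> bool" where
  "bianchi_curvature_le \<epsilon> N U2 \<longleftrightarrow>
     (\<forall>S\<in>N. \<exists>\<nu>. away_normal N U2 S \<nu> \<and>
        (\<forall>(\<gamma> :: 'n \<Rightarrow> real \<Rightarrow> 'n tensor4) \<gamma>' acc \<delta>.
           \<delta> > 0 \<and>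
           (\<forall>i. \<gamma> i 0 = S \<and>
                (\<forall>t. \<bar>t\<bar> < \<delta> \<longrightarrow> \<gamma> i t \<in> N \<and>
                     (\<gamma> i has_vector_derivative \<gamma>' i t) (at t)) \<and>
                (\<gamma>' i has_vector_derivative acc i) (at 0)) \<and>
           second_bianchi (\<lambda>i. \<gamma>' i 0)
           \<longrightarrow> (\<Sum>i\<in>UNIV. acinner (acc i) \<nu>) \<le> \<epsilon> * (\<Sum>i\<in>UNIV. acnorm2 (\<gamma>' i 0))))"

lemma bianchi_convex_iff:
  "bianchi_convex \<Omega> \<longleftrightarrow> \<Omega> \<subseteq> acts \<and> closed \<Omega> \<and>
     (\<forall>\<epsilon>>0. \<forall>R\<in>(top_of_set acts) frontier_of \<Omega>. \<exists>N U U1 U2.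
        supporting \<Omega> R N U U1 U2 \<and> bianchi_curvature_le \<epsilon> N U2)"
  unfolding bianchi_convex_def bianchi_curvature_le_def ..

lemma supporting_antimono:
  "supporting C x0 N U U1 U2 \<Longrightarrow> C' \<subseteq> C \<Longrightarrow> supporting C' x0 N U U1 U2"
  unfolding supporting_def by blast

lemma bianchi_convex_frontier_support_subset:
  assumes "bianchi_convex \<Omega>" "\<Omega>' \<subseteq> \<Omega>" "\<epsilon> > 0" "R \<in> (top_of_set acts) frontier_of \<Omega>"
  shows "\<exists>N U U1 U2. supporting \<Omega>' R N U U1 U2 \<and> bianchi_curvature_le \<epsilon> N U2"
  using assms supporting_antimono unfolding bianchi_convex_iff by meson

theorem lemma3p5:
  fixes \<Omega>1 \<Omega>2 :: "'n::finite tensor4 set"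
  assumes "bianchi_convex \<Omega>1" and "bianchi_convex \<Omega>2"
  shows "bianchi_convex (\<Omega>1 \<inter> \<Omega>2)"
  unfolding bianchi_convex_iff
proof (intro conjI allI impI ballI)
  show "\<Omega>1 \<inter> \<Omega>2 \<subseteq> acts" "closed (\<Omega>1 \<inter> \<Omega>2)"
    using assms by (auto simp: bianchi_convex_iff)
next
  fix \<epsilon> :: real and R
  assume "\<epsilon> > 0" and "R \<in> (top_of_set acts) frontier_of (\<Omega>1 \<inter> \<Omega>2)"
  then consider "R \<in> (top_of_set acts) frontier_of \<Omega>1" | "R \<in> (top_of_set acts) frontier_of \<Omega>2"
    using frontier_of_Int_subset by (metis Un_iff subsetD)
  then show "\<exists>N U U1 U2. supporting (\<Omega>1 \<inter> \<Omega>2) R N U U1 U2 \<and> bianchi_curvature_le \<epsilon> N U2"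
    using bianchi_convex_frontier_support_subset assms \<open>\<epsilon> > 0\<close>
    by (metis inf_le1 inf_le2)
qed

end
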